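(* For every integer $n\ge 2$, the path $P_n$ on $n$ vertices satisfies $IDI(P_n)=2$.
   Context: For a finite simple connected graph $G=(V,E)$ with diameter $d$, a rank assignment is a function $f:V\to\mathbb{R}$; under $f$, the string of a vertex $v$ is the $d$-vector whose $i$-th coordinate is the sum of $f(w)$ over all vertices $w$ with $d(v,w)=i$. The ID-index $IDI(G)$ is the minimum $k$ such that there exists $f:V\to\mathbb{R}$ with $|f(V)|=k$ under which all vertices have distinct strings. *)

theory Defs
  imports Complex_Main
begin

text \<open>A finite simple graph is given by a vertex set V and a symmetric irreflexive
adjacency relation E. Walks are vertex lists with consecutive vertices adjacent.\<close>

definition is_walk :: "'a set \<Rightarrow> ('a \<Rightarrow> 'a \<Rightarrow> bool) \<Rightarrow> 'a list \<Rightarrow> bool" where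
  "is_walk V E xs \<longleftrightarrow> xs \<noteq> [] \<and> set xs \<subseteq> V \<and>
     (\<forall>i. Suc i < length xs \<longrightarrow> E (xs ! i) (xs ! Suc i))"

definition gdist :: "'a set \<Rightarrow> ('a \<Rightarrow> 'a \<Rightarrow> bool) \<Rightarrow> 'a \<Rightarrow> 'a \<Rightarrow> nat" where
  "gdist V E v w = (LEAST k. \<exists>xs. is_walk V E xs \<and> hd xs = v \<and> last xs = w \<and> length xs = Suc k)"

definition diameter :: "'a set \<Rightarrow> ('a \<Rightarrow> 'a \<Rightarrow> bool) \<Rightarrow> nat" where
  "diameter V E = Max {gdist V E v w | v w. v \<in> V \<and> w \<in> V}"

definition vstring :: "'a set \<Rightarrow> ('a \<Rightarrow> 'a \<Rightarrow> bool) \<Rightarrow> ('a \<Rightarrow> real) \<Rightarrow> 'a \<Rightarrow> real list" where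
  "vstring V E f v = map (\<lambda>i. \<Sum>w\<in>{w\<in>V. gdist V E v w = i}. f w) [1..<Suc (diameter V E)]"

definition IDI :: "'a set \<Rightarrow> ('a \<Rightarrow> 'a \<Rightarrow> bool) \<Rightarrow> nat" where
  "IDI V E = (LEAST k. \<exists>f :: 'a \<Rightarrow> real. card (f ` V) = k \<and> inj_on (vstring V E f) V)"

definition path_V :: "nat \<Rightarrow> nat set" where
  "path_V n = {0..<n}"

definition path_E :: "nat \<Rightarrow> nat \<Rightarrow> bool" where
  "path_E i j \<longleftrightarrow> Suc i = j \<or> Suc j = i"

end

theory Submission
  imports Defs "HOL-Library.Indicator_Function"
begin

(* A rank assignment with a single value c gives every vertex the string of its distance-layer
   sizes scaled by c. The two ends of P_n have the same layer sizes (one vertex at each distance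
   1, ..., n-1), so one value never separates them. Conversely, under the indicator of an end u
   the string of v is the unit vector at position d(v, u) (the zero vector for v = u), and on a
   path d(-, u) is injective, so two values suffice. *)

definition sphere :: "'a set \<Rightarrow> ('a \<Rightarrow> 'a \<Rightarrow> bool) \<Rightarrow> 'a \<Rightarrow> nat \<Rightarrow> 'a set" where
  "sphere V E v i = {w \<in> V. gdist V E v w = i}"

lemma vstring_sphere:
  "vstring V E f v = map (\<lambda>i. \<Sum>w\<in>sphere V E v i. f w) [1..<Suc (diameter V E)]"
  by (simp add: vstring_def sphere_def)

lemma gdist_le_diameter:
  assumes "finite V" "v \<in> V" "w \<in> V"
  shows "gdist V E v w \<le> diameter V E"
proof -
  have "{gdist V E v w | v w. v \<in> V \<and> w \<in> V} = (\<lambda>(v, w). gdist V E v w) ` (V \<times> V)"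
    by auto
  then have "finite {gdist V E v w | v w. v \<in> V \<and> w \<in> V}"
    using assms(1) by simp
  then show ?thesis
    unfolding diameter_def using assms(2,3) by (auto intro: Max_ge)
qed

lemma is_walk_rev:
  assumes "symp E" "is_walk V E xs"
  shows "is_walk V E (rev xs)"
proof -
  have "E (xs ! (length xs - Suc i)) (xs ! (length xs - Suc (Suc i)))"
    if "Suc i < length xs" for i
  proof -
    have "E (xs ! (length xs - Suc (Suc i))) (xs ! Suc (length xs - Suc (Suc i)))"
      using assms(2) that unfolding is_walk_def by (metis Suc_diff_Suc diff_less zero_less_Suc less_trans)
    moreover have "Suc (length xs - Suc (Suc i)) = length xs - Suc i"
      using that by simp
    ultimately show ?thesis
      using assms(1) by (metis sympD)
  qed
  then show ?thesis
    using assms(2) by (auto simp: is_walk_def rev_nth)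
qed

lemma gdist_sym:
  assumes "symp E"
  shows "gdist V E v w = gdist V E w v"
proof -
  have walk_rev: "is_walk V E (rev xs) \<and> hd (rev xs) = w \<and> last (rev xs) = v \<and> length (rev xs) = k"
    if "is_walk V E xs \<and> hd xs = v \<and> last xs = w \<and> length xs = k" for xs v w k
    using that is_walk_rev[OF assms] by (auto simp: is_walk_def hd_rev last_rev)
  have "(\<exists>xs. is_walk V E xs \<and> hd xs = v \<and> last xs = w \<and> length xs = k) \<longleftrightarrow>
        (\<exists>xs. is_walk V E xs \<and> hd xs = w \<and> last xs = v \<and> length xs = k)" for k
    using walk_rev by blast
  then show ?thesis
    unfolding gdist_def by simp
qed

lemma vstring_eq_if_const:
  assumes "\<And>w. w \<in> V \<Longrightarrow> f w = c"
    and "\<And>i. card (sphere V E v i) = card (sphere V E v' i)"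
  shows "vstring V E f v = vstring V E f v'"
proof -
  have "(\<Sum>w\<in>sphere V E u i. f w) = c * card (sphere V E u i)" for u i
    using assms(1) by (simp add: sphere_def)
  then show ?thesis
    using assms(2) by (simp add: vstring_sphere)
qed

lemma two_le_card_image_if_inj_on_vstring:
  assumes "finite V" "v \<in> V" "v' \<in> V" "v \<noteq> v'"
    and "\<And>i. card (sphere V E v i) = card (sphere V E v' i)"
    and "inj_on (vstring V E f) V"
  shows "2 \<le> card (f ` V)"
proof (rule ccontr)
  assume "\<not> 2 \<le> card (f ` V)"
  moreover have "card (f ` V) \<noteq> 0"
    using assms(1,2) by auto
  ultimately obtain c where "f ` V = {c}"
    by (metis One_nat_def card_1_singletonE less_2_cases not_le)
  then have "vstring V E f v = vstring V E f v'"
    by (intro vstring_eq_if_const[OF _ assms(5)]) auto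
  then show False
    using assms(2-4,6) by (auto dest: inj_onD)
qed

lemma sum_indicator_sphere:
  assumes "finite V" "u \<in> V"
  shows "(\<Sum>w\<in>sphere V E v i. indicator {u} w :: 'b::semiring_1) = (if gdist V E v u = i then 1 else 0)"
proof -
  have "(\<Sum>w\<in>sphere V E v i. indicator {u} w :: 'b) = (\<Sum>w\<in>sphere V E v i. if u = w then 1 else 0)"
    by (rule sum.cong) (auto simp: indicator_def)
  also have "\<dots> = (if u \<in> sphere V E v i then 1 else 0)"
    using assms(1) by (simp add: sphere_def)
  finally show ?thesis
    using assms(2) by (simp add: sphere_def)
qed

lemma inj_on_vstring_indicator:
  assumes "finite V" "u \<in> V" and inj: "inj_on (\<lambda>v. gdist V E v u) V"
  shows "inj_on (vstring V E (indicator {u})) V"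
proof (rule inj_onI)
  fix x y
  assume x: "x \<in> V" and y: "y \<in> V"
    and eq: "vstring V E (indicator {u}) x = vstring V E (indicator {u}) y"
  have coord: "gdist V E x u = i \<longleftrightarrow> gdist V E y u = i" if "1 \<le> i" "i \<le> diameter V E" for i
  proof -
    have "\<forall>j \<in> set [1..<Suc (diameter V E)].
            (if gdist V E x u = j then 1 else 0 :: real) = (if gdist V E y u = j then 1 else 0)"
      using eq by (simp only: vstring_sphere sum_indicator_sphere[OF assms(1,2)] map_eq_conv)
    then have "(if gdist V E x u = i then 1 else 0 :: real) = (if gdist V E y u = i then 1 else 0)"
      using that by (simp del: upt_Suc)
    then show ?thesis
      by (auto split: if_splits)
  qed
  have "gdist V E x u = gdist V E y u"
  proof (cases "gdist V E x u = 0")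
    case True
    then show ?thesis
      using coord[of "gdist V E y u"] gdist_le_diameter[OF assms(1) y assms(2), of E] by (auto simp: Suc_le_eq)
  next
    case False
    then show ?thesis
      using coord[of "gdist V E x u"] gdist_le_diameter[OF assms(1) x assms(2), of E] by auto
  qed
  then show "x = y"
    using inj x y by (auto dest: inj_onD)
qed

lemma card_indicator_image:
  assumes "u \<in> V" "w \<in> V" "w \<noteq> u"
  shows "card (indicator {u} ` V :: 'b::zero_neq_one set) = 2"
proof -
  have "indicator {u} ` V = {1, 0 :: 'b}"
    using assms by (auto simp: indicator_def image_iff)
  then show ?thesis
    by simp
qed

lemma mem_path_V [simp]: "v \<in> path_V n \<longleftrightarrow> v < n"
  by (simp add: path_V_def)

lemma symp_path_E: "symp path_E"
  by (auto simp: symp_def path_E_def)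

lemma is_walk_path_upt:
  assumes "v \<le> w" "w < n"
  shows "is_walk (path_V n) path_E [v..<Suc w]"
  using assms by (auto simp: is_walk_def path_E_def nth_append simp del: upt_Suc)

lemma path_walk_nth_le:
  assumes "is_walk V path_E xs" "i < length xs"
  shows "xs ! i \<le> xs ! 0 + i"
  using assms(2)
proof (induction i)
  case 0
  then show ?case by simp
next
  case (Suc i)
  have "path_E (xs ! i) (xs ! Suc i)"
    using assms(1) Suc.prems by (simp add: is_walk_def)
  then show ?case
    using Suc by (auto simp: path_E_def)
qed

lemma gdist_path_le:
  assumes "v \<le> w" "w < n"
  shows "gdist (path_V n) path_E v w = w - v"
  unfolding gdist_def
proof (rule Least_equality)
  show "\<exists>xs. is_walk (path_V n) path_E xs \<and> hd xs = v \<and> last xs = w \<and> length xs = Suc (w - v)"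
    using is_walk_path_upt[OF assms] assms(1) by (intro exI[of _ "[v..<Suc w]"]) (simp del: upt_Suc)
next
  fix k
  assume "\<exists>xs. is_walk (path_V n) path_E xs \<and> hd xs = v \<and> last xs = w \<and> length xs = Suc k"
  then obtain xs where xs: "is_walk (path_V n) path_E xs" "xs ! 0 = v" "xs ! k = w" "length xs = Suc k"
    by (metis hd_conv_nth last_conv_nth list.size(3) nat.distinct(1) diff_Suc_1)
  show "w - v \<le> k"
    using path_walk_nth_le[OF xs(1), of k] xs(2-4) by simp
qed

lemma gdist_path:
  assumes "v < n" "w < n"
  shows "gdist (path_V n) path_E v w = (if v \<le> w then w - v else v - w)"
  using assms gdist_path_le gdist_sym[OF symp_path_E] by (metis nat_le_linear)

lemma sphere_path_first: "sphere (path_V n) path_E 0 i = (if i < n then {i} else {})"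
  by (auto simp: sphere_def gdist_path)

lemma sphere_path_last: "sphere (path_V n) path_E (n - 1) i = (if i < n then {n - 1 - i} else {})"
  by (auto simp: sphere_def gdist_path)

lemma card_sphere_path_ends:
  "card (sphere (path_V n) path_E 0 i) = card (sphere (path_V n) path_E (n - 1) i)"
  unfolding sphere_path_first sphere_path_last by simp

lemma inj_on_gdist_path_first: "inj_on (\<lambda>v. gdist (path_V n) path_E v 0) (path_V n)"
  by (auto simp: inj_on_def gdist_path)

theorem mainTheorem7:
  fixes n :: nat
  assumes "n \<ge> 2"
  shows "IDI (path_V n) path_E = 2"
  unfolding IDI_def
proof (rule Least_equality)
  have V: "finite (path_V n)" "0 \<in> path_V n" "n - 1 \<in> path_V n" "n - 1 \<noteq> 0"
    using assms by (auto simp: path_V_def)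
  show "\<exists>f :: nat \<Rightarrow> real. card (f ` path_V n) = 2 \<and> inj_on (vstring (path_V n) path_E f) (path_V n)"
    using card_indicator_image[OF V(2-4)] inj_on_vstring_indicator[OF V(1,2) inj_on_gdist_path_first]
    by blast
  show "2 \<le> k"
    if "\<exists>f :: nat \<Rightarrow> real. card (f ` path_V n) = k \<and> inj_on (vstring (path_V n) path_E f) (path_V n)"
    for k
    using that two_le_card_image_if_inj_on_vstring[OF V(1-3) V(4)[symmetric] card_sphere_path_ends]
    by blast
qed

end
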